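(* Consider a sequence $\sigma$ of restricted operations applied to a dynamic set $S$ with function $f:S\to\mathbb{Z}_{\ge0}$, starting from $S=\emptyset$, while a set $H\subseteq S$ and a set $P\subseteq H$ are maintained by the rules described in the context. Let $h_t$ denote the $h$-index of $S$ and $f$ after the first $t$ operations, and let $q=\sum_{t:\,h_t\ge1} 1/h_t$. Then the total number of times an element is added to $P$ or removed from $P$ during $\sigma$ is $O(q)$ (with an absolute constant in the $O$).
   Context: The $h$-index of $S$ and $f$ is the largest $h\ge0$ such that some $h$-element subset of $S$ has all $f$-values at least $h$. Restricted operations: insert a new element $x$ with $f(x)=0$; delete an element $x$ with $f(x)=0$; increment $f(x)$ by $1$; decrement $f(x)$ by $1$ (when $f(x)\ge1$). Initially $H=P=\emptyset$. Maintenance of $H$ (with $h=|H|$ before the operation): insertions and deletions of elements with $f=0$ leave $H$ unchanged. On an increment of $f(x)$: if $x\in H$ or the new value $f(x)\le h$, $H$ is unchanged; otherwise ($x\notin H$ and new $f(x)=h+1$), if some $y\in H$ has $f(y)=h$ then one such $y$ (chosen arbitrarily) is removed from $H$ and $x$ is added, and if no such $y$ exists then $x$ is added to $H$ (so $|H|$ becomes $h+1$). On a decrement of $f(x)$: if $x\notin H$ or the new value $f(x)\ge h$, $H$ is unchanged; otherwise ($x\in H$, new $f(x)=h-1$), $x$ is removed from $H$, and if some $z\notin H$ has $f(z)=h$ then one such $z$ (chosen arbitrarily) is added to $H$, otherwise $|H|$ becomes $h-1$. (These rules keep $|H|$ equal to the $h$-index, $f(x)\ge|H|$ for all $x\in H$,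 and every $x$ with $f(x)>|H|$ in $H$.) Maintenance of $P$: whenever an element is removed from $H$ it is also removed from $P$ (if present); after each operation, every $x\in H\setminus P$ with $f(x)\ge 2|H|$ is added to $P$; no other changes are made to $P$. *)

theory Defs
  imports Complex_Main
begin

datatype 'a oper = Ins 'a | Del 'a | Inc 'a | Dec 'a

text \<open>State: the dynamic set S, the function f (with f x = 0 outside S), and the
  maintained sets H and P.\<close>
record 'a hstate =
  S :: "'a set"
  f :: "'a \<Rightarrow> nat"
  H :: "'a set"
  P :: "'a set"

definition init_state :: "'a hstate" where
  "init_state = \<lparr>S = {}, f = (\<lambda>_. 0), H = {}, P = {}\<rparr>"

definition hindex :: "'a set \<Rightarrow> ('a \<Rightarrow> nat) \<Rightarrow> nat" where
  "hindex A g = (GREATEST h. \<exists>T \<subseteq> A. card T = h \<and> (\<forall>x\<in>T. h \<le> g x))"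

text \<open>Update of H on an increment of f(x); g is the function after the increment.
  The arbitrary choice of y is modelled nondeterministically.\<close>
definition H_inc :: "('a \<Rightarrow> nat) \<Rightarrow> 'a set \<Rightarrow> 'a \<Rightarrow> 'a set \<Rightarrow> bool" where
  "H_inc g Hs x Hs' \<longleftrightarrow>
     (if x \<in> Hs \<or> g x \<le> card Hs then Hs' = Hs
      else if (\<exists>y\<in>Hs. g y = card Hs)
           then (\<exists>y\<in>Hs. g y = card Hs \<and> Hs' = insert x (Hs - {y}))
           else Hs' = insert x Hs)"

definition H_dec :: "('a \<Rightarrow> nat) \<Rightarrow> 'a set \<Rightarrow> 'a set \<Rightarrow> 'a \<Rightarrow> 'a set \<Rightarrow> bool" where
  "H_dec g A Hs x Hs' \<longleftrightarrow>
     (if x \<notin> Hs \<or> card Hs \<le> g x then Hs' = Hs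
      else if (\<exists>z\<in>A - Hs. g z = card Hs)
           then (\<exists>z\<in>A - Hs. g z = card Hs \<and> Hs' = insert z (Hs - {x}))
           else Hs' = Hs - {x})"

definition P_upd :: "('a \<Rightarrow> nat) \<Rightarrow> 'a set \<Rightarrow> 'a set \<Rightarrow> 'a set" where
  "P_upd g Hs' Ps = (Ps \<inter> Hs') \<union> {x \<in> Hs' - (Ps \<inter> Hs'). 2 * card Hs' \<le> g x}"

definition step :: "'a hstate \<Rightarrow> 'a oper \<Rightarrow> 'a hstate \<Rightarrow> bool" where
  "step st op st' \<longleftrightarrow>
     (case op of
        Ins x \<Rightarrow> x \<notin> S st \<and> S st' = insert x (S st) \<and> f st' = (f st)(x := 0)
                 \<and> H st' = H st
      | Del x \<Rightarrow> x \<in> S st \<and> f st x = 0 \<and> S st' = S st - {x} \<and> f st' = f st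
                 \<and> H st' = H st
      | Inc x \<Rightarrow> x \<in> S st \<and> S st' = S st \<and> f st' = (f st)(x := f st x + 1)
                 \<and> H_inc (f st') (H st) x (H st')
      | Dec x \<Rightarrow> x \<in> S st \<and> 1 \<le> f st x \<and> S st' = S st \<and> f st' = (f st)(x := f st x - 1)
                 \<and> H_dec (f st') (S st) (H st) x (H st'))
     \<and> P st' = P_upd (f st') (H st') (P st)"

text \<open>A run: ops is the operation sequence, sts the list of states
  (sts ! t is the state after the first t operations).\<close>
definition run :: "'a oper list \<Rightarrow> 'a hstate list \<Rightarrow> bool" where
  "run ops sts \<longleftrightarrow> length sts = Suc (length ops) \<and> sts ! 0 = init_state \<and>
     (\<forall>t < length ops. step (sts ! t) (ops ! t) (sts ! Suc t))"

definition P_changes :: "'a hstate list \<Rightarrow> nat" where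
  "P_changes sts = (\<Sum>t < length sts - 1.
      card (P (sts ! Suc t) - P (sts ! t)) + card (P (sts ! t) - P (sts ! Suc t)))"

definition qsum :: "'a hstate list \<Rightarrow> real" where
  "qsum sts = (\<Sum>t \<in> {t. 1 \<le> t \<and> t < length sts \<and> 1 \<le> hindex (S (sts ! t)) (f (sts ! t))}.
      1 / real (hindex (S (sts ! t)) (f (sts ! t))))"

end

theory Submission
  imports Defs
begin

text \<open>
  Proof idea (amortised analysis with a potential function).  Write h for |H| and
  N for a smoothed version of h^2 which, unlike h^2 itself, changes by at most 2 per
  operation and satisfies h(h+1)/2 \<le> N \<le> h^2.  Every element x of H - P has
  f(x) < 2h and carries the weight max 0 (f(x)^2 / N - 3); the potential is the total
  weight of H - P.  An element entering H has f(x) \<le> h + 1 and hence weight 0; an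
  element entering P has f(x) \<ge> 2h, hence weight at least 1, which pays for its
  insertion into P.  Since only one value of f changes by 1 and N changes by at most 2,
  the total weight changes by O(h / N) = O(1/h) per operation.  Summing over the run,
  the insertions into P cost at most 40 q, and removals are bounded by insertions
  because P starts empty.
\<close>

section \<open>The invariant maintained by H\<close>

text \<open>H certifies the h-index of A under g: all its elements have value at least |H|,
  and every element of A with a larger value belongs to H.\<close>
definition H_valid :: "'a set \<Rightarrow> ('a \<Rightarrow> nat) \<Rightarrow> 'a set \<Rightarrow> bool" where
  "H_valid A g Hs \<longleftrightarrow> finite A \<and> Hs \<subseteq> A \<and> (\<forall>x\<in>Hs. card Hs \<le> g x)
     \<and> (\<forall>x\<in>A. card Hs < g x \<longrightarrow> x \<in> Hs)"

lemma H_valid_finite: "H_valid A g Hs \<Longrightarrow> finite Hs"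
  by (auto simp: H_valid_def intro: finite_subset)

lemma hindex_eq_card_H:
  assumes valid: "H_valid A g Hs"
  shows "hindex A g = card Hs"
  unfolding hindex_def
proof (rule Greatest_equality)
  show "\<exists>T\<subseteq>A. card T = card Hs \<and> (\<forall>x\<in>T. card Hs \<le> g x)"
    using valid by (auto simp: H_valid_def)
next
  fix h assume "\<exists>T\<subseteq>A. card T = h \<and> (\<forall>x\<in>T. h \<le> g x)"
  then obtain T where T: "T \<subseteq> A" "card T = h" "\<forall>x\<in>T. h \<le> g x" by blast
  show "h \<le> card Hs"
  proof (rule ccontr)
    assume "\<not> h \<le> card Hs"
    then have "T \<subseteq> Hs" using T valid by (force simp: H_valid_def)
    then have "card T \<le> card Hs" using H_valid_finite[OF valid] by (rule card_mono[rotated])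
    with T \<open>\<not> h \<le> card Hs\<close> show False by simp
  qed
qed

text \<open>H changes gradually: its size changes by at most one, and an element that enters
  has value at most |H| + 1 (it enters on a value |H| or |H| + 1).\<close>
definition H_gradual :: "('a \<Rightarrow> nat) \<Rightarrow> 'a set \<Rightarrow> 'a set \<Rightarrow> bool" where
  "H_gradual g' Hs Hs' \<longleftrightarrow> card Hs' \<le> card Hs + 1 \<and> card Hs \<le> card Hs' + 1
     \<and> (\<forall>y\<in>Hs' - Hs. g' y \<le> card Hs' + 1)"

lemma H_inc_correct:
  assumes valid: "H_valid A g Hs" and x: "x \<in> A" and g': "g' = g(x := g x + 1)"
    and upd: "H_inc g' Hs x Hs'"
  shows "H_valid A g' Hs' \<and> H_gradual g' Hs Hs'"
proof -
  let ?h = "card Hs"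
  have fin: "finite Hs" using H_valid_finite[OF valid] .
  show ?thesis
  proof (cases "x \<in> Hs \<or> g' x \<le> ?h")
    case True
    then have "Hs' = Hs" using upd by (simp add: H_inc_def)
    then show ?thesis using valid True g' by (auto simp: H_valid_def H_gradual_def)
  next
    case False
    then have xn: "x \<notin> Hs" and "g x \<ge> ?h" using g' by auto
    moreover have "g x \<le> ?h" using valid x xn by (auto simp: H_valid_def)
    ultimately have gx: "g' x = ?h + 1" using g' by simp
    show ?thesis
    proof (cases "\<exists>y\<in>Hs. g' y = ?h")
      case True
      then obtain y where y: "y \<in> Hs" "g' y = ?h" and Hs': "Hs' = insert x (Hs - {y})"
        using upd False by (auto simp: H_inc_def)
      have "card Hs' = ?h"
        using Hs' fin xn card_Suc_Diff1[OF fin y(1)] by (metis card_insert_disjoint finite_Diff Diff_iff)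
      then show ?thesis using valid Hs' x gx y xn g'
        by (auto simp: H_valid_def H_gradual_def)
    next
      case no_swap: False
      then have Hs': "Hs' = insert x Hs" using upd False by (auto simp: H_inc_def)
      have "\<forall>z\<in>Hs. g' z \<ge> ?h + 1"
        using valid xn no_swap g' by (force simp: H_valid_def)
      then show ?thesis using valid Hs' fin x gx xn g'
        by (auto simp: H_valid_def H_gradual_def)
    qed
  qed
qed

lemma H_dec_correct:
  assumes valid: "H_valid A g Hs" and x: "x \<in> A" and pos: "1 \<le> g x"
    and g': "g' = g(x := g x - 1)" and upd: "H_dec g' A Hs x Hs'"
  shows "H_valid A g' Hs' \<and> H_gradual g' Hs Hs'"
proof -
  let ?h = "card Hs"
  have fin: "finite Hs" using H_valid_finite[OF valid] .
  show ?thesis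
  proof (cases "x \<notin> Hs \<or> ?h \<le> g' x")
    case True
    then have "Hs' = Hs" using upd by (simp add: H_dec_def)
    then show ?thesis using valid True g' by (auto simp: H_valid_def H_gradual_def)
  next
    case False
    then have xH: "x \<in> Hs" and "g x \<le> ?h" using g' pos by auto
    moreover have "?h \<le> g x" using valid xH by (auto simp: H_valid_def)
    ultimately have gx: "g x = ?h" and h_pos: "1 \<le> ?h" using pos by auto
    show ?thesis
    proof (cases "\<exists>z\<in>A - Hs. g' z = ?h")
      case True
      then obtain z where z: "z \<in> A - Hs" "g' z = ?h" and Hs': "Hs' = insert z (Hs - {x})"
        using upd False by (auto simp: H_dec_def)
      have "card Hs' = ?h"
        using Hs' fin z card_Suc_Diff1[OF fin xH] by (metis card_insert_disjoint finite_Diff Diff_iff)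
      then show ?thesis using valid Hs' x gx z xH g'
        by (auto simp: H_valid_def H_gradual_def)
    next
      case no_swap: False
      then have Hs': "Hs' = Hs - {x}" using upd False by (auto simp: H_dec_def)
      have "y \<in> Hs'" if "y \<in> A" "?h - 1 < g' y" for y
      proof -
        have "y \<noteq> x" "?h \<le> g y" using that gx g' h_pos by (auto split: if_splits)
        moreover have "g y \<noteq> ?h \<or> y \<in> Hs" using no_swap that \<open>y \<noteq> x\<close> g' by force
        ultimately show ?thesis using valid that Hs' by (auto simp: H_valid_def)
      qed
      then show ?thesis using valid Hs' fin x gx xH g' h_pos
        by (auto simp: H_valid_def H_gradual_def)
    qed
  qed
qed

definition unit_change :: "('a \<Rightarrow> nat) \<Rightarrow> ('a \<Rightarrow> nat) \<Rightarrow> 'a \<Rightarrow> bool" where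
  "unit_change g g' w \<longleftrightarrow> (\<forall>y. y \<noteq> w \<longrightarrow> g' y = g y) \<and> g' w \<le> g w + 1 \<and> g w \<le> g' w + 1"

lemma unit_change_sum_le:
  assumes ch: "unit_change g g' w" and fin: "finite D"
  shows "(\<Sum>x\<in>D. \<bar>real (g' x) - real (g x)\<bar>) \<le> 1"
proof -
  have "(\<Sum>x\<in>D. \<bar>real (g' x) - real (g x)\<bar>) \<le> (\<Sum>x\<in>D. if x = w then 1 else 0)"
    using ch by (intro sum_mono) (auto simp: unit_change_def)
  also have "\<dots> \<le> 1" using fin by (subst sum.delta) auto
  finally show ?thesis .
qed

definition wf_state :: "'a hstate \<Rightarrow> bool" where
  "wf_state st \<longleftrightarrow> H_valid (S st) (f st) (H st) \<and> (\<forall>x. x \<notin> S st \<longrightarrow> f st x = 0)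
     \<and> P st \<subseteq> H st \<and> (\<forall>x\<in>H st - P st. f st x < 2 * card (H st))"

lemma wf_init_state: "wf_state init_state"
  by (simp add: wf_state_def H_valid_def init_state_def)

text \<open>Insertions and deletions concern elements of value 0, which never lie in a
  nonempty H, so H stays certifying; increments and decrements were treated above.\<close>
lemma step_H_correct:
  assumes wf: "wf_state st" and st: "step st op st'"
  shows "H_valid (S st') (f st') (H st') \<and> H_gradual (f st') (H st) (H st')"
proof -
  have valid: "H_valid (S st) (f st) (H st)" and zero: "\<forall>x. x \<notin> S st \<longrightarrow> f st x = 0"
    using wf by (auto simp: wf_state_def)
  show ?thesis
  proof (cases op)
    case (Ins x)
    then have "x \<notin> S st" "f st x = 0" "S st' = insert x (S st)" "f st' = f st" "H st' = H st"
      using st zero by (auto simp: step_def)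
    then show ?thesis using valid by (auto simp: H_valid_def H_gradual_def)
  next
    case (Del x)
    then have del: "x \<in> S st" "f st x = 0" "S st' = S st - {x}" "f st' = f st" "H st' = H st"
      using st by (auto simp: step_def)
    have "x \<notin> H st"
      using valid del H_valid_finite[OF valid] by (force simp: H_valid_def card_gt_0_iff)
    then show ?thesis using valid del by (auto simp: H_valid_def H_gradual_def)
  next
    case (Inc x)
    then show ?thesis
      using st H_inc_correct[OF valid] by (auto simp: step_def)
  next
    case (Dec x)
    then show ?thesis
      using st H_dec_correct[OF valid] by (auto simp: step_def)
  qed
qed

lemma step_unit_change:
  assumes wf: "wf_state st" and st: "step st op st'"
  shows "\<exists>w. unit_change (f st) (f st') w"
  using st wf by (cases op) (auto simp: step_def wf_state_def unit_change_def)

lemma step_wf_state: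
  assumes wf: "wf_state st" and st: "step st op st'"
  shows "wf_state st'"
proof -
  have "\<forall>x. x \<notin> S st' \<longrightarrow> f st' x = 0"
    using wf st by (cases op) (auto simp: step_def wf_state_def)
  moreover have "P st' = P_upd (f st') (H st') (P st)" using st by (simp add: step_def)
  ultimately show ?thesis using step_H_correct[OF wf st] by (auto simp: wf_state_def P_upd_def)
qed

section \<open>A smoothed square of the h-index\<close>

definition level_count :: "('a \<Rightarrow> nat) \<Rightarrow> nat \<Rightarrow> nat" where
  "level_count g v = card {x. v \<le> g x}"

lemma level_set_finite:
  fixes g :: "'a \<Rightarrow> nat"
  assumes "finite A" and "\<forall>x. x \<notin> A \<longrightarrow> g x = 0" and "1 \<le> v"
  shows "finite {x. v \<le> g x}"
proof (rule finite_subset[OF _ assms(1)])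
  show "{x. v \<le> g x} \<subseteq> A"
  proof
    fix x assume "x \<in> {x. v \<le> g x}"
    then show "x \<in> A" using assms(2,3) by (cases "x \<in> A") auto
  qed
qed

lemma level_count_low:
  assumes valid: "H_valid A g Hs" and zero: "\<forall>x. x \<notin> A \<longrightarrow> g x = 0"
    and v: "1 \<le> v" "v \<le> card Hs"
  shows "card Hs \<le> level_count g v"
proof -
  have "finite {x. v \<le> g x}" using valid zero v(1) by (intro level_set_finite) (auto simp: H_valid_def)
  moreover have "Hs \<subseteq> {x. v \<le> g x}" using valid v(2) by (force simp: H_valid_def)
  ultimately show ?thesis unfolding level_count_def by (rule card_mono)
qed

lemma level_count_high:
  assumes valid: "H_valid A g Hs" and zero: "\<forall>x. x \<notin> A \<longrightarrow> g x = 0" and v: "card Hs < v"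
  shows "level_count g v \<le> card Hs"
proof -
  have "{x. v \<le> g x} \<subseteq> Hs" using valid zero v by (force simp: H_valid_def)
  then show ?thesis unfolding level_count_def by (rule card_mono[OF H_valid_finite[OF valid]])
qed

lemma card_subset_insert_le:
  assumes "finite B" and "A \<subseteq> insert w B"
  shows "card A \<le> card B + 1"
proof -
  have "card A \<le> card (insert w B)" using assms by (intro card_mono) auto
  also have "\<dots> \<le> card B + 1" using assms(1) by (simp add: card_insert_if)
  finally show ?thesis .
qed

lemma level_count_unit_change:
  assumes ch: "unit_change g g' w"
    and fin: "finite {x. v \<le> g x}" "finite {x. v \<le> g' x}"
  shows "level_count g' v \<le> level_count g v + 1" and "level_count g v \<le> level_count g' v + 1"
    and "v \<noteq> max (g w) (g' w) \<Longrightarrow> level_count g' v = level_count g v"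
proof -
  have other: "y \<noteq> w \<Longrightarrow> g' y = g y" for y using ch by (simp add: unit_change_def)
  show "level_count g' v \<le> level_count g v + 1"
    unfolding level_count_def using fin(1) other by (intro card_subset_insert_le[of _ _ w]) auto
  show "level_count g v \<le> level_count g' v + 1"
    unfolding level_count_def using fin(2) other by (intro card_subset_insert_le[of _ _ w]) auto
  assume "v \<noteq> max (g w) (g' w)"
  then have at_w: "v \<le> g' w \<longleftrightarrow> v \<le> g w" using ch by (auto simp: unit_change_def)
  have "{x. v \<le> g' x} = {x. v \<le> g x}"
  proof (rule Collect_cong)
    show "v \<le> g' x \<longleftrightarrow> v \<le> g x" for x using other at_w by (cases "x = w") auto
  qed
  then show "level_count g' v = level_count g v" by (simp add: level_count_def)
qed

text \<open>Summing over
  the levels up to 2h gives a quantity between h(h+1)/2 and h^2 which, in contrast to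
  h^2, moves by at most 2 when f changes at one point.\<close>
definition tau :: "nat \<Rightarrow> nat \<Rightarrow> real" where
  "tau v c = min (max 0 (2 * real c - real v)) (real v)"

definition smooth_sq :: "('a \<Rightarrow> nat) \<Rightarrow> nat \<Rightarrow> real" where
  "smooth_sq g h = (\<Sum>v\<in>{1..2 * h}. tau v (level_count g v))"

lemma tau_unit_change: "c' \<le> c + 1 \<Longrightarrow> c \<le> c' + 1 \<Longrightarrow> \<bar>tau v c' - tau v c\<bar> \<le> 2"
  by (simp add: tau_def)

text \<open>Levels above 2|H| contribute nothing, so the range of summation can be enlarged.\<close>
lemma smooth_sq_extend:
  assumes valid: "H_valid A g Hs" and zero: "\<forall>x. x \<notin> A \<longrightarrow> g x = 0"
    and M: "2 * card Hs \<le> M"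
  shows "(\<Sum>v\<in>{1..M}. tau v (level_count g v)) = smooth_sq g (card Hs)"
proof -
  let ?h = "card Hs"
  have "(\<Sum>v\<in>{1..M}. tau v (level_count g v)) =
      smooth_sq g ?h + (\<Sum>v\<in>{2 * ?h + 1..M}. tau v (level_count g v))"
  proof -
    have "{1..M} = {1..2 * ?h} \<union> {2 * ?h + 1..M}" using M by auto
    then show ?thesis unfolding smooth_sq_def by (simp add: sum.union_disjoint)
  qed
  moreover have "tau v (level_count g v) = 0" if "2 * ?h < v" for v
    using level_count_high[OF valid zero, of v] that by (simp add: tau_def)
  ultimately show ?thesis by simp
qed

lemma smooth_sq_bounds:
  assumes valid: "H_valid A g Hs" and zero: "\<forall>x. x \<notin> A \<longrightarrow> g x = 0"
  shows "real (card Hs) * (real (card Hs) + 1) \<le> 2 * smooth_sq g (card Hs)"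
    and "smooth_sq g (card Hs) \<le> real (card Hs) * real (card Hs)"
proof -
  let ?h = "card Hs"
  have split: "smooth_sq g ?h = (\<Sum>v\<in>{1..?h}. tau v (level_count g v))
      + (\<Sum>v\<in>{?h + 1..?h + ?h}. tau v (level_count g v))"
  proof -
    have "{1..2 * ?h} = {1..?h} \<union> {?h + 1..?h + ?h}" by auto
    then show ?thesis unfolding smooth_sq_def by (simp add: sum.union_disjoint)
  qed
  have low: "(\<Sum>v\<in>{1..?h}. tau v (level_count g v)) = (\<Sum>v\<in>{1..?h}. real v)"
  proof (rule sum.cong[OF refl])
    fix v assume "v \<in> {1..?h}"
    then show "tau v (level_count g v) = real v"
      using level_count_low[OF valid zero, of v] by (simp add: tau_def)
  qed
  have gauss: "2 * (\<Sum>v\<in>{1..?h}. real v) = real ?h * (real ?h + 1)"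
    using double_gauss_sum_from_Suc_0[of ?h] by simp
  have high_nonneg: "0 \<le> (\<Sum>v\<in>{?h + 1..?h + ?h}. tau v (level_count g v))"
    by (rule sum_nonneg) (simp add: tau_def)
  have "(\<Sum>v\<in>{?h + 1..?h + ?h}. tau v (level_count g v))
      \<le> (\<Sum>v\<in>{?h + 1..?h + ?h}. 2 * real ?h - real v)"
  proof (rule sum_mono)
    fix v assume "v \<in> {?h + 1..?h + ?h}"
    then show "tau v (level_count g v) \<le> 2 * real ?h - real v"
      using level_count_high[OF valid zero, of v] by (simp add: tau_def)
  qed
  also have "\<dots> = (\<Sum>u\<in>{1..?h}. real ?h - real u)"
    using sum.shift_bounds_cl_nat_ivl[of "\<lambda>v. 2 * real ?h - real v" 1 ?h ?h]
    by (simp add: add.commute)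
  also have "\<dots> = real ?h * real ?h - (\<Sum>u\<in>{1..?h}. real u)"
    by (simp add: sum_subtractf)
  finally show "real ?h * (real ?h + 1) \<le> 2 * smooth_sq g ?h"
    and "smooth_sq g ?h \<le> real ?h * real ?h"
    using split low gauss high_nonneg by linarith+
qed

text \<open>Under a unit change of g, with |H| growing by at most one, the smoothed square
  changes by at most 2, since only one level count changes.\<close>
lemma smooth_sq_unit_change:
  assumes valid: "H_valid A g Hs" and zero: "\<forall>x. x \<notin> A \<longrightarrow> g x = 0"
    and valid': "H_valid A' g' Hs'" and zero': "\<forall>x. x \<notin> A' \<longrightarrow> g' x = 0"
    and ch: "unit_change g g' w" and grow: "card Hs' \<le> card Hs + 1"
  shows "\<bar>smooth_sq g' (card Hs') - smooth_sq g (card Hs)\<bar> \<le> 2"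
proof -
  let ?M = "2 * card Hs + 2"
  let ?d = "\<lambda>v. tau v (level_count g' v) - tau v (level_count g v)"
  have "smooth_sq g' (card Hs') - smooth_sq g (card Hs) = (\<Sum>v\<in>{1..?M}. ?d v)"
    using smooth_sq_extend[OF valid zero, of ?M] smooth_sq_extend[OF valid' zero', of ?M] grow
    by (simp add: sum_subtractf)
  also have "\<bar>\<dots>\<bar> \<le> (\<Sum>v\<in>{1..?M}. \<bar>?d v\<bar>)" by (rule sum_abs)
  also have "\<dots> \<le> (\<Sum>v\<in>{1..?M}. if v = max (g w) (g' w) then 2 else 0)"
  proof (rule sum_mono)
    fix v assume "v \<in> {1..?M}"
    then have "finite {x. v \<le> g x}" "finite {x. v \<le> g' x}"
      using level_set_finite[of A g v] level_set_finite[of A' g' v] valid zero valid' zero'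
      by (auto simp: H_valid_def)
    note lc = level_count_unit_change[OF ch this]
    show "\<bar>?d v\<bar> \<le> (if v = max (g w) (g' w) then 2 else 0)"
      using lc tau_unit_change[OF lc(1,2)] by auto
  qed
  also have "\<dots> \<le> 2" by (subst sum.delta) auto
  finally show ?thesis .
qed

section \<open>Weights and the potential\<close>

definition weight :: "real \<Rightarrow> nat \<Rightarrow> real" where
  "weight N n = max 0 (real n ^ 2 / N - 3)"

lemma weight_nonneg: "0 \<le> weight N n"
  by (simp add: weight_def)

text \<open>Values at most h + 1 have weight 0 (this is where the offset 3 is needed).\<close>
lemma weight_small:
  assumes h: "2 \<le> h" and N: "h * (h + 1) \<le> 2 * N" and n: "real n \<le> h + 1"
  shows "weight N n = 0"
proof -
  have "0 < h * (h + 1)" using h by simp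
  then have N_pos: "0 < N" using N by linarith
  have "real n * real n \<le> (h + 1) * (h + 1)" using n by (intro mult_mono) auto
  also have "\<dots> \<le> (3 / 2 * h) * (h + 1)" using h by (intro mult_right_mono) auto
  also have "\<dots> \<le> 3 * N" using N by simp
  finally show ?thesis using N_pos by (simp add: weight_def power2_eq_square divide_le_eq)
qed

lemma weight_large:
  assumes h: "0 \<le> h" and N_pos: "0 < N" and N: "N \<le> h * h" and n: "2 * h \<le> real n"
  shows "1 \<le> weight N n"
proof -
  have "(2 * h) * (2 * h) \<le> real n * real n" using h n by (intro mult_mono) auto
  then have "4 * N \<le> real n ^ 2" using N by (simp add: power2_eq_square)
  then show ?thesis using N_pos by (simp add: weight_def le_divide_eq)
qed

lemma weight_bounded:
  assumes N: "h * (h + 1) \<le> 2 * N" and n: "real n < 2 * h"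
  shows "weight N n \<le> 5"
proof -
  have h_pos: "0 < h" using n by linarith
  then have "0 < h * (h + 1)" by simp
  then have N_pos: "0 < N" using N by linarith
  have "real n * real n \<le> (2 * h) * (2 * h)" using n by (intro mult_mono) auto
  also have "\<dots> \<le> 8 * N" using N h_pos by (simp add: algebra_simps)
  finally show ?thesis using N_pos by (simp add: weight_def power2_eq_square divide_le_eq)
qed

lemma weight_change:
  assumes h_pos: "0 < h" and N: "h * h \<le> 2 * N" and N'_pos: "0 < N'" and dN: "\<bar>N - N'\<bar> \<le> 2"
    and n: "real n \<le> 2 * h" and n': "real n' \<le> 2 * h"
  shows "\<bar>weight N' n' - weight N n\<bar> \<le> \<bar>real n' - real n\<bar> * (4 * h / N') + 16 / N'"
proof -
  define a a' where "a = real n" and "a' = real n'"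
  have "0 < h * h" using h_pos by simp
  then have N_pos: "0 < N" using N by linarith
  have split: "a'^2 / N' - a^2 / N = (a' - a) * (a' + a) / N' + a^2 * (N - N') / (N * N')"
    using N_pos N'_pos by (simp add: field_simps power2_eq_square)
  have first: "\<bar>(a' - a) * (a' + a) / N'\<bar> \<le> \<bar>a' - a\<bar> * (4 * h / N')"
  proof -
    have "\<bar>(a' - a) * (a' + a)\<bar> \<le> \<bar>a' - a\<bar> * (4 * h)"
      using n n' by (auto simp: abs_mult a_def a'_def intro!: mult_left_mono)
    then show ?thesis using N'_pos by (simp add: abs_div divide_right_mono)
  qed
  have second: "\<bar>a^2 * (N - N') / (N * N')\<bar> \<le> 16 / N'"
  proof -
    have "a * a \<le> (2 * h) * (2 * h)" using n by (intro mult_mono) (auto simp: a_def)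
    then have "a^2 \<le> 8 * N" using N by (simp add: power2_eq_square)
    then have "\<bar>a^2 * (N - N')\<bar> \<le> 8 * N * 2"
      using dN N_pos mult_mono[of "a^2" "8 * N" "\<bar>N - N'\<bar>" 2] by (simp add: abs_mult)
    then have "\<bar>a^2 * (N - N')\<bar> / (N * N') \<le> 16 * N / (N * N')"
      using N_pos N'_pos by (intro divide_right_mono) auto
    then show ?thesis using N_pos N'_pos by (simp add: abs_div)
  qed
  have "\<bar>weight N' n' - weight N n\<bar> \<le> \<bar>a'^2 / N' - a^2 / N\<bar>"
    by (simp add: weight_def a_def a'_def max_def abs_if)
  also have "\<dots> \<le> \<bar>(a' - a) * (a' + a) / N'\<bar> + \<bar>a^2 * (N - N') / (N * N')\<bar>"
    unfolding split by (rule abs_triangle_ineq)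
  also have "\<dots> \<le> \<bar>a' - a\<bar> * (4 * h / N') + 16 / N'"
    using first second by (rule add_mono)
  finally show ?thesis by (simp add: a_def a'_def)
qed

definition sq_proxy :: "'a hstate \<Rightarrow> real" where
  "sq_proxy st = smooth_sq (f st) (card (H st))"

definition potential :: "'a hstate \<Rightarrow> real" where
  "potential st = (\<Sum>x\<in>H st - P st. weight (sq_proxy st) (f st x))"

lemma potential_nonneg: "0 \<le> potential st"
  unfolding potential_def by (rule sum_nonneg) (simp add: weight_nonneg)

lemma wf_sq_proxy_bounds:
  assumes "wf_state st"
  shows "real (card (H st)) * (real (card (H st)) + 1) \<le> 2 * sq_proxy st"
    and "sq_proxy st \<le> real (card (H st)) * real (card (H st))"
  using smooth_sq_bounds[of "S st" "f st" "H st"] assms by (auto simp: wf_state_def sq_proxy_def)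

lemma sq_proxy_pos:
  assumes "wf_state st" and "1 \<le> card (H st)"
  shows "0 < sq_proxy st"
proof -
  have "0 < real (card (H st)) * (real (card (H st)) + 1)" using assms(2) by simp
  then show ?thesis using wf_sq_proxy_bounds(1)[OF assms(1)] by linarith
qed

text \<open>Since elements of H - P have value below 2|H|, the potential is at most 5|H|.\<close>
lemma potential_le:
  assumes wf: "wf_state st"
  shows "potential st \<le> 5 * real (card (H st))"
proof -
  have "potential st \<le> real (card (H st - P st)) * 5"
    unfolding potential_def
  proof (rule sum_bounded_above)
    fix x assume "x \<in> H st - P st"
    then have "f st x < 2 * card (H st)" using wf by (auto simp: wf_state_def)
    then show "weight (sq_proxy st) (f st x) \<le> 5"
      using wf_sq_proxy_bounds(1)[OF wf] by (intro weight_bounded[where h = "real (card (H st))"]) linarith+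

  qed
  also have "\<dots> \<le> 5 * real (card (H st))"
    using H_valid_finite[of "S st" "f st" "H st"] wf by (auto simp: wf_state_def card_mono)
  finally show ?thesis .
qed

section \<open>The amortised cost of a single step\<close>

context
  fixes st st' :: "'a hstate" and op :: "'a oper"
  assumes wf: "wf_state st" and st: "step st op st'"
begin

lemma step_sq_proxy_change: "\<bar>sq_proxy st' - sq_proxy st\<bar> \<le> 2"
proof -
  obtain w where "unit_change (f st) (f st') w" using step_unit_change[OF wf st] by blast
  moreover have "wf_state st'" by (rule step_wf_state[OF wf st])
  ultimately show ?thesis
    using smooth_sq_unit_change[of "S st" "f st" "H st" "S st'" "f st'" "H st'" w]
      wf step_H_correct[OF wf st] by (auto simp: sq_proxy_def wf_state_def H_gradual_def)
qed

lemma step_entrant_weightless: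
  assumes big: "2 \<le> card (H st')" and x: "x \<in> H st' - H st"
  shows "weight (sq_proxy st') (f st' x) = 0"
proof (rule weight_small[where h = "real (card (H st'))"])
  have "f st' x \<le> card (H st') + 1"
    using step_H_correct[OF wf st] x by (auto simp: H_gradual_def)
  then show "real (f st' x) \<le> real (card (H st')) + 1" by linarith
qed (use big wf_sq_proxy_bounds(1)[OF step_wf_state[OF wf st]] in auto)

text \<open>An element added to P was already in H - P (entrants of H are too small for P)
  and its value is at least 2|H|.\<close>
lemma step_added_to_P:
  assumes big: "2 \<le> card (H st')" and x: "x \<in> P st' - P st"
  shows "x \<in> (H st - P st) \<inter> H st'" and "2 * card (H st') \<le> f st' x"
proof -
  have P': "P st' = P_upd (f st') (H st') (P st)" using st by (simp add: step_def)
  then have x_H': "x \<in> H st'" and large: "2 * card (H st') \<le> f st' x"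
    using x by (auto simp: P_upd_def)
  from large show "2 * card (H st') \<le> f st' x" .
  have "x \<in> H st"
  proof (rule ccontr)
    assume "x \<notin> H st"
    then have "f st' x \<le> card (H st') + 1"
      using step_H_correct[OF wf st] x_H' by (auto simp: H_gradual_def)
    then show False using large big by simp
  qed
  then show "x \<in> (H st - P st) \<inter> H st'" using x x_H' by simp
qed

text \<open>The potential after the step lives on elements that were already in H - P:
  the other elements of H' - P' are entrants of H, which carry no weight.\<close>
lemma step_potential_after:
  assumes big: "2 \<le> card (H st')"
  shows "potential st' = (\<Sum>x\<in>(H st - P st) \<inter> (H st' - P st'). weight (sq_proxy st') (f st' x))"
proof -
  let ?B = "(H st - P st) \<inter> (H st' - P st')" and ?w' = "\<lambda>x. weight (sq_proxy st') (f st' x)"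
  have fin_H': "finite (H st')" using step_wf_state[OF wf st] H_valid_finite by (auto simp: wf_state_def)
  have "potential st' = (\<Sum>x\<in>?B. ?w' x) + (\<Sum>x\<in>(H st' - P st') - ?B. ?w' x)"
    unfolding potential_def using fin_H' by (subst sum.subset_diff[of ?B]) auto
  also have "(\<Sum>x\<in>(H st' - P st') - ?B. ?w' x) = 0"
  proof (rule sum.neutral)
    have "P st \<inter> H st' \<subseteq> P st'" using st by (auto simp: step_def P_upd_def)
    then have "(H st' - P st') - ?B \<subseteq> H st' - H st" using wf by (auto simp: wf_state_def)
    then show "\<forall>x\<in>(H st' - P st') - ?B. ?w' x = 0" using step_entrant_weightless[OF big] by auto
  qed
  finally show ?thesis by simp
qed

lemma step_added_weight:
  assumes big: "2 \<le> card (H st')" and x: "x \<in> P st' - P st"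
  shows "1 \<le> weight (sq_proxy st') (f st' x)"
proof (rule weight_large[OF of_nat_0_le_iff])
  have wf': "wf_state st'" by (rule step_wf_state[OF wf st])
  show "0 < sq_proxy st'" using sq_proxy_pos[OF wf'] big by simp
  show "sq_proxy st' \<le> real (card (H st')) * real (card (H st'))" by (rule wf_sq_proxy_bounds(2)[OF wf'])
  have "2 * card (H st') \<le> f st' x" by (rule step_added_to_P(2)[OF big x])
  then show "2 * real (card (H st')) \<le> real (f st' x)" by linarith
qed

text \<open>Combinatorial core: each element added to P brings weight at least 1 and the new
  potential lives on old elements of H - P, so the insertions plus the increase of the
  potential are bounded by the total weight change on (H - P) \<inter> H'.\<close>
lemma step_potential_vs_change:
  assumes big: "2 \<le> card (H st')"
  shows "real (card (P st' - P st)) + potential st' - potential st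
    \<le> (\<Sum>x\<in>(H st - P st) \<inter> H st'.
          \<bar>weight (sq_proxy st') (f st' x) - weight (sq_proxy st) (f st x)\<bar>)"
proof -
  define w w' where "w x = weight (sq_proxy st) (f st x)"
    and "w' x = weight (sq_proxy st') (f st' x)" for x
  define A B D where "A = P st' - P st" and "B = (H st - P st) \<inter> (H st' - P st')"
    and "D = (H st - P st) \<inter> H st'"
  have fin_H: "finite (H st)" using wf H_valid_finite by (auto simp: wf_state_def)
  have AD: "A \<subseteq> D" using step_added_to_P(1)[OF big] by (auto simp: A_def D_def)
  have BD: "B \<subseteq> D" and AB: "A \<inter> B = {}" by (auto simp: A_def B_def D_def)
  have fin: "finite A" "finite B" "finite D"
    using AD BD fin_H by (auto simp: D_def intro: finite_subset)
  have pot': "potential st' = (\<Sum>x\<in>B. w' x)"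
    using step_potential_after[OF big] by (simp add: B_def w'_def)
  have pot: "(\<Sum>x\<in>A. w x) + (\<Sum>x\<in>B. w x) \<le> potential st"
    unfolding potential_def w_def using fin AB AD BD fin_H
    by (simp add: sum.union_disjoint[symmetric] weight_nonneg D_def sum_mono2)
  have added: "real (card A) \<le> (\<Sum>x\<in>A. w' x)"
    using sum_mono[of A "\<lambda>_. 1" w'] step_added_weight[OF big] by (simp add: A_def w'_def)
  have "real (card A) + potential st' - potential st \<le> (\<Sum>x\<in>A \<union> B. w' x - w x)"
    using pot pot' added fin AB by (simp add: sum.union_disjoint sum_subtractf)
  also have "\<dots> \<le> (\<Sum>x\<in>D. \<bar>w' x - w x\<bar>)"
    using fin AD BD by (intro order_trans[OF sum_mono sum_mono2]) auto
  finally show ?thesis by (simp add: A_def D_def w_def w'_def)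
qed

text \<open>That total weight change is O(|H| / N'): one element changes its value by one,
  and N changes by at most 2.\<close>
lemma step_weight_change:
  assumes big: "2 \<le> card (H st')"
  shows "(\<Sum>x\<in>(H st - P st) \<inter> H st'.
          \<bar>weight (sq_proxy st') (f st' x) - weight (sq_proxy st) (f st x)\<bar>)
    \<le> 20 * real (card (H st)) / sq_proxy st'"
proof -
  let ?h = "real (card (H st))" and ?N = "sq_proxy st" and ?N' = "sq_proxy st'"
  define D where "D = (H st - P st) \<inter> H st'"
  have wf': "wf_state st'" by (rule step_wf_state[OF wf st])
  obtain w where ch: "unit_change (f st) (f st') w" using step_unit_change[OF wf st] by blast
  have fin_H: "finite (H st)" using wf H_valid_finite by (auto simp: wf_state_def)
  have "card (H st') \<le> card (H st) + 1"
    using step_H_correct[OF wf st] by (simp add: H_gradual_def)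
  then have h_pos: "0 < ?h" using big by simp
  have N: "?h * ?h \<le> 2 * ?N" using wf_sq_proxy_bounds(1)[OF wf] h_pos by (simp add: algebra_simps)
  have N'_pos: "0 < ?N'" using sq_proxy_pos[OF wf'] big by simp
  have dN: "\<bar>?N - ?N'\<bar> \<le> 2" using step_sq_proxy_change by simp
  have each: "\<bar>weight ?N' (f st' x) - weight ?N (f st x)\<bar>
      \<le> \<bar>real (f st' x) - real (f st x)\<bar> * (4 * ?h / ?N') + 16 / ?N'" if "x \<in> D" for x
  proof (rule weight_change[OF h_pos N N'_pos dN])
    have "f st x < 2 * card (H st)" using that wf by (auto simp: D_def wf_state_def)
    moreover have "f st' x \<le> f st x + 1" using ch by (cases "x = w") (auto simp: unit_change_def)
    ultimately show "real (f st x) \<le> 2 * ?h" and "real (f st' x) \<le> 2 * ?h" by linarith+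
  qed
  have "(\<Sum>x\<in>D. \<bar>weight ?N' (f st' x) - weight ?N (f st x)\<bar>)
      \<le> (\<Sum>x\<in>D. \<bar>real (f st' x) - real (f st x)\<bar> * (4 * ?h / ?N') + 16 / ?N')"
    by (rule sum_mono) (rule each)
  also have "\<dots> = (\<Sum>x\<in>D. \<bar>real (f st' x) - real (f st x)\<bar>) * (4 * ?h / ?N')
      + real (card D) * (16 / ?N')"
    by (simp only: sum.distrib sum_distrib_right sum_constant)
  also have "\<dots> \<le> 1 * (4 * ?h / ?N') + ?h * (16 / ?N')"
  proof (intro add_mono mult_right_mono)
    show "(\<Sum>x\<in>D. \<bar>real (f st' x) - real (f st x)\<bar>) \<le> 1"
      using unit_change_sum_le[OF ch] fin_H by (simp add: D_def)
    have "card D \<le> card (H st)" using fin_H by (intro card_mono) (auto simp: D_def)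
    then show "real (card D) \<le> ?h" by simp
  qed (use h_pos N'_pos in auto)
  finally show ?thesis by (simp add: D_def field_simps)
qed

text \<open>Amortised bound: insertions into P plus increase of the potential cost at most
  40 / |H'| (recall 1 / 0 = 0).  For |H'| \<le> 1 the potential and P are tiny.\<close>
lemma step_amortized:
  "real (card (P st' - P st)) + potential st' - potential st \<le> 40 / real (card (H st'))"
proof -
  let ?h' = "card (H st')"
  have wf': "wf_state st'" by (rule step_wf_state[OF wf st])
  have fin_H': "finite (H st')" using wf' H_valid_finite by (auto simp: wf_state_def)
  show ?thesis
  proof (cases "2 \<le> ?h'")
    case big: True
    let ?h = "real (card (H st))" and ?N' = "sq_proxy st'"
    have "card (H st) \<le> ?h' + 1" using step_H_correct[OF wf st] by (simp add: H_gradual_def)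
    then have "20 * ?h * real ?h' \<le> 20 * (real ?h' + 1) * real ?h'" by (simp add: mult_right_mono)
    also have "\<dots> \<le> 40 * ?N'" using wf_sq_proxy_bounds(1)[OF wf'] by (simp add: algebra_simps)
    moreover have "0 < ?N'" using sq_proxy_pos[OF wf'] big by simp
    ultimately have "20 * ?h / ?N' \<le> 40 / real ?h'"
      using big by (simp add: field_simps)
    then show ?thesis
      using step_potential_vs_change[OF big] step_weight_change[OF big] by linarith
  next
    case False
    have "card (P st' - P st) \<le> ?h'"
      using wf' fin_H' by (intro card_mono) (auto simp: wf_state_def)
    moreover have "potential st' \<le> 5 * real ?h'" by (rule potential_le[OF wf'])
    moreover have "?h' = 0 \<or> ?h' = 1" using False by auto
    then have "6 * real ?h' \<le> 40 / real ?h'" by auto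
    ultimately show ?thesis using potential_nonneg[of st] by linarith
  qed
qed

end

section \<open>Summing over a run\<close>

lemma run_wf_state:
  assumes R: "run ops sts" and t: "t \<le> length ops"
  shows "wf_state (sts ! t)"
  using t
proof (induction t)
  case 0
  then show ?case using R wf_init_state by (simp add: run_def)
next
  case (Suc t)
  then have "step (sts ! t) (ops ! t) (sts ! Suc t)" using R by (simp add: run_def)
  with Suc show ?case using step_wf_state by simp
qed

text \<open>The h-index after step t is |H|, so q is the sum of the terms 1 / |H| after each
  step (zero terms for |H| = 0 are harmless).\<close>
lemma qsum_eq_sum_inverse:
  assumes R: "run ops sts"
  shows "qsum sts = (\<Sum>t<length ops. 1 / real (card (H (sts ! Suc t))))"
proof -
  define hx where "hx t = hindex (S (sts ! t)) (f (sts ! t))" for t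
  have hx: "hx t = card (H (sts ! t))" if "t \<le> length ops" for t
    using run_wf_state[OF R that] hindex_eq_card_H by (auto simp: hx_def wf_state_def)
  have "qsum sts = (\<Sum>t\<in>{t\<in>{1..length ops}. 1 \<le> hx t}. 1 / real (hx t))"
    using R unfolding qsum_def hx_def run_def by (intro sum.cong) auto
  also have "\<dots> = (\<Sum>t\<in>{1..length ops}. 1 / real (hx t))"
    by (rule sum.mono_neutral_left) auto
  also have "\<dots> = (\<Sum>t<length ops. 1 / real (hx (Suc t)))"
    by (simp add: sum.atLeast1_atMost_eq)
  finally show ?thesis using hx by simp
qed

lemma card_diff_balance:
  assumes "finite A" and "finite B"
  shows "card B + card (A - B) = card A + card (B - A)"
proof -
  have "card (A \<union> B) = card B + card (A - B)"
    using assms card_Un_disjoint[of B "A - B"] by (simp add: Un_Diff_cancel2 sup_commute)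
  moreover have "card (A \<union> B) = card A + card (B - A)"
    using assms card_Un_disjoint[of A "B - A"] by simp
  ultimately show ?thesis by simp
qed

lemma removals_le_additions:
  assumes fin: "\<And>t. t \<le> n \<Longrightarrow> finite (A t)" and empty: "A 0 = {}"
  shows "(\<Sum>t<n. card (A t - A (Suc t))) \<le> (\<Sum>t<n. card (A (Suc t) - A t))"
proof -
  have "card (A k) + (\<Sum>t<k. card (A t - A (Suc t))) = (\<Sum>t<k. card (A (Suc t) - A t))"
    if "k \<le> n" for k
    using that
  proof (induction k)
    case 0
    then show ?case using empty by simp
  next
    case (Suc k)
    have "card (A (Suc k)) + card (A k - A (Suc k)) = card (A k) + card (A (Suc k) - A k)"
      using fin Suc.prems by (intro card_diff_balance) auto
    then show ?case using Suc by simp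
  qed
  from this[of n] show ?thesis by simp
qed

lemma amortized_sum:
  fixes a b \<phi> :: "nat \<Rightarrow> real"
  assumes step: "\<And>t. t < n \<Longrightarrow> a t + (\<phi> (Suc t) - \<phi> t) \<le> b t"
    and start: "\<phi> 0 = 0" and final: "0 \<le> \<phi> n"
  shows "(\<Sum>t<n. a t) \<le> (\<Sum>t<n. b t)"
proof -
  have "(\<Sum>t<n. a t) + (\<phi> n - \<phi> 0) = (\<Sum>t<n. a t + (\<phi> (Suc t) - \<phi> t))"
    by (simp add: sum.distrib sum_lessThan_telescope)
  also have "\<dots> \<le> (\<Sum>t<n. b t)" using step by (intro sum_mono) auto
  finally show ?thesis using start final by simp
qed

lemma run_additions_bound:
  assumes R: "run ops sts"
  shows "(\<Sum>t<length ops. real (card (P (sts ! Suc t) - P (sts ! t)))) \<le> 40 * qsum sts"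
proof -
  have "(\<Sum>t<length ops. real (card (P (sts ! Suc t) - P (sts ! t))))
      \<le> (\<Sum>t<length ops. 40 / real (card (H (sts ! Suc t))))"
  proof (rule amortized_sum[where \<phi> = "\<lambda>t. potential (sts ! t)"])
    fix t assume t: "t < length ops"
    have "step (sts ! t) (ops ! t) (sts ! Suc t)" using R t by (simp add: run_def)
    from step_amortized[OF run_wf_state[OF R] this] t
    show "real (card (P (sts ! Suc t) - P (sts ! t)))
        + (potential (sts ! Suc t) - potential (sts ! t)) \<le> 40 / real (card (H (sts ! Suc t)))"
      by simp
  qed (use R potential_nonneg in \<open>auto simp: run_def potential_def init_state_def\<close>)
  then show ?thesis by (simp add: qsum_eq_sum_inverse[OF R] sum_distrib_left)
qed

theorem P_changes_bound:
  assumes R: "run ops sts"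
  shows "real (P_changes sts) \<le> 80 * qsum sts"
proof -
  let ?add = "\<lambda>t. card (P (sts ! Suc t) - P (sts ! t))"
  let ?rem = "\<lambda>t. card (P (sts ! t) - P (sts ! Suc t))"
  have fin: "finite (P (sts ! t))" if "t \<le> length ops" for t
    using run_wf_state[OF R that] by (auto simp: wf_state_def intro: finite_subset H_valid_finite)
  have "(\<Sum>t<length ops. ?rem t) \<le> (\<Sum>t<length ops. ?add t)"
    using R fin by (intro removals_le_additions) (auto simp: run_def init_state_def)
  then have "real (P_changes sts) \<le> 2 * (\<Sum>t<length ops. real (?add t))"
    using R by (simp add: P_changes_def run_def sum.distrib flip: of_nat_sum)
  also have "\<dots> \<le> 80 * qsum sts" using run_additions_bound[OF R] by simp
  finally show ?thesis .
qed

theorem theorem2: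
  "\<exists>C :: real. \<forall>(ops :: nat oper list) sts. run ops sts \<longrightarrow> real (P_changes sts) \<le> C * qsum sts"
  using P_changes_bound by blast

end
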